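(* Let $n,m$ be positive integers and $s$ a real number with $0\le s\le n$. Define $$g(\alpha)=\sum_{i=1}^n\Big(2i\alpha_i+m\big(\alpha_i+1-\tfrac{s}{n}\big)^+\Big)$$ on the polytope $\mathcal{P}=\{\alpha\in\mathbb{R}^n:\ \tfrac{s}{n}\ge\alpha_1\ge\alpha_2\ge\cdots\ge\alpha_n,\ \sum_{i=1}^n\alpha_i=0\}$. If $m\ge 2(\lceil s\rceil-1)$, then $$\min_{\alpha\in\mathcal{P}}g(\alpha)=d^*(s):=-(m+n-2\lfloor s\rfloor-1)s+mn-\lfloor s\rfloor(\lfloor s\rfloor+1).$$
   Context: $(x)^+=\max(0,x)$. The function $d^*$ takes the value $(n-s)(m-s)$ at integers $s$ and is linear in between. *)

theory Defs
  imports Complex_Main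
begin

text \<open>Vectors in R^n are represented as functions nat => real, indexed by 1..n,
  and extensional (zero outside 1..n).\<close>

definition polytopeP :: "nat \<Rightarrow> real \<Rightarrow> (nat \<Rightarrow> real) set" where
  "polytopeP n s = {\<alpha>. (\<forall>i. i \<notin> {1..n} \<longrightarrow> \<alpha> i = 0)
     \<and> (n \<ge> 1 \<longrightarrow> \<alpha> 1 \<le> s / real n)
     \<and> (\<forall>i\<in>{1..<n}. \<alpha> (Suc i) \<le> \<alpha> i)
     \<and> (\<Sum>i=1..n. \<alpha> i) = 0}"

definition gfun :: "nat \<Rightarrow> nat \<Rightarrow> real \<Rightarrow> (nat \<Rightarrow> real) \<Rightarrow> real" where
  "gfun n m s \<alpha> = (\<Sum>i=1..n. 2 * real i * \<alpha> i + real m * max 0 (\<alpha> i + 1 - s / real n))"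

definition dstar_formula :: "nat \<Rightarrow> nat \<Rightarrow> real \<Rightarrow> real" where
  "dstar_formula n m s = - (real m + real n - 2 * of_int \<lfloor>s\<rfloor> - 1) * s + real m * real n
      - of_int \<lfloor>s\<rfloor> * (of_int \<lfloor>s\<rfloor> + 1)"

end

theory Submission
  imports Defs
begin

text \<open>Put \<open>x\<^sub>i = \<alpha>\<^sub>i + 1 - s/n\<close>; on \<open>\<P>\<close> we have \<open>x\<^sub>i \<le> 1\<close> and \<open>\<Sum> x\<^sub>i = n - s\<close>.
  With \<open>c = \<lceil>s\<rceil>\<close> and \<open>a = n - c + 1\<close>, the function \<open>g(\<alpha>)\<close> equals \<open>d\<^sup>*(s)\<close> plus the slack
  \<open>\<Sum> (m + 2a - 2i)(x\<^sub>i\<^sup>+ - x\<^sub>i) + 2 \<Sum> ((i - a) x\<^sub>i\<^sup>+ - min (i - a) 0)\<close>.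
  The first sum is nonnegative because \<open>m \<ge> 2(c - 1)\<close> and \<open>i \<le> n\<close>, the second because
  \<open>0 \<le> x\<^sub>i\<^sup>+ \<le> 1\<close>. Both vanish at \<open>x = (1, \<dots>, 1, c - s, 0, \<dots>, 0)\<close> with the fractional
  entry at index \<open>a\<close>, which is therefore a minimiser.\<close>

lemma antitone_steps_le_first:
  fixes f :: "nat \<Rightarrow> 'a::preorder"
  assumes steps: "\<forall>i\<in>{1..<n}. f (Suc i) \<le> f i" and "1 \<le> i" "i \<le> n"
  shows "f i \<le> f 1"
  using \<open>1 \<le> i\<close> \<open>i \<le> n\<close>
proof (induction i rule: dec_induct)
  case (step k)
  then have "f (Suc k) \<le> f k" using steps by simp
  with step show ?case using order_trans by fastforce
qed simp

lemma sum_Icc_min_zero: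
  assumes "N \<le> n"
  shows "(\<Sum>i=1..n. min (real i - (real N + 1)) 0) = - real N * (real N + 1) / 2"
proof -
  have "(\<Sum>i=1..n. min (real i - (real N + 1)) 0) = (\<Sum>i=1..N. real i - (real N + 1))"
    using assms by (intro sum.mono_neutral_cong_right) auto
  also have "\<dots> = - real N * (real N + 1) / 2"
    using double_gauss_sum_from_Suc_0[of N, where 'a=real] by (simp add: sum_subtractf algebra_simps)
  finally show ?thesis .
qed

lemma dstar_formula_ceiling_form:
  assumes "real c - 1 \<le> s" "s \<le> real c"
  shows "dstar_formula n m s = (real m + real n + 1 - 2 * real c) * (real n - s)
           - (real n - real c) * (real n - real c + 1)"
proof (cases "s = real c")
  case True
  then show ?thesis by (simp add: dstar_formula_def algebra_simps)
next
  case False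
  then have "\<lfloor>s\<rfloor> = int c - 1" using assms by (simp add: floor_eq_iff)
  then have floor_s: "real_of_int \<lfloor>s\<rfloor> = real c - 1" by simp
  show ?thesis unfolding dstar_formula_def floor_s by (simp add: algebra_simps)
qed

lemma min_zero_le_mult_unit:
  fixes t p :: real
  assumes "0 \<le> p" "p \<le> 1"
  shows "min t 0 \<le> t * p"
proof (cases "t \<le> 0")
  case True
  then have "t * 1 \<le> t * p" using assms(2) by (intro mult_left_mono_neg) auto
  then show ?thesis by simp
qed (use assms in simp)

lemma gfun_eq_dstar_formula_plus_slack:
  fixes \<alpha> x :: "nat \<Rightarrow> real" and c :: nat
  assumes "n > 0" "c \<le> n" "real c - 1 \<le> s" "s \<le> real c" "(\<Sum>i=1..n. \<alpha> i) = 0"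
    and x: "\<And>i. i \<in> {1..n} \<Longrightarrow> x i = \<alpha> i + 1 - s / real n"
  defines "a \<equiv> real n - real c + 1"
  shows "gfun n m s \<alpha> = dstar_formula n m s
      + (\<Sum>i=1..n. (real m + 2 * a - 2 * real i) * (max 0 (x i) - x i))
      + 2 * (\<Sum>i=1..n. (real i - a) * max 0 (x i) - min (real i - a) 0)"
    (is "_ = _ + ?S + 2 * ?T")
proof -
  have pointwise: "2 * real i * \<alpha> i + real m * max 0 (\<alpha> i + 1 - s / real n)
      = (real m + 2 * a) * x i + 2 * min (real i - a) 0 - (1 - s / real n) * (2 * real i)
        + (real m + 2 * a - 2 * real i) * (max 0 (x i) - x i)
        + 2 * ((real i - a) * max 0 (x i) - min (real i - a) 0)" if "i \<in> {1..n}" for i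
    unfolding x[OF that] by (simp add: algebra_simps)
  have "gfun n m s \<alpha> = (\<Sum>i=1..n. (real m + 2 * a) * x i + 2 * min (real i - a) 0
        - (1 - s / real n) * (2 * real i)
        + (real m + 2 * a - 2 * real i) * (max 0 (x i) - x i)
        + 2 * ((real i - a) * max 0 (x i) - min (real i - a) 0))"
    unfolding gfun_def by (rule sum.cong[OF refl pointwise])
  also have "\<dots> = (real m + 2 * a) * (\<Sum>i=1..n. x i)
        + 2 * (\<Sum>i=1..n. min (real i - a) 0)
        - (1 - s / real n) * (2 * (\<Sum>i=1..n. real i)) + ?S + 2 * ?T"
    by (simp add: sum.distrib sum_subtractf sum_distrib_left)
  also have "(\<Sum>i=1..n. x i) = real n - s"
    using assms(1,5) by (simp add: x sum.distrib sum_subtractf)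
  also have "2 * (\<Sum>i=1..n. min (real i - a) 0) = - (real n - real c) * (real n - real c + 1)"
    using sum_Icc_min_zero[of "n - c" n] assms(2) by (simp add: a_def)
  also have "(1 - s / real n) * (2 * (\<Sum>i=1..n. real i)) = (real n - s) * (real n + 1)"
    using double_gauss_sum_from_Suc_0[of n, where 'a=real] assms(1) by (simp add: field_simps)
  finally show ?thesis
    unfolding dstar_formula_ceiling_form[OF assms(3,4)] by (simp add: a_def algebra_simps)
qed

lemma nat_ceiling_bounds:
  fixes s :: real
  assumes "0 \<le> s" "s \<le> real n"
  shows "nat \<lceil>s\<rceil> \<le> n" "real (nat \<lceil>s\<rceil>) - 1 \<le> s" "s \<le> real (nat \<lceil>s\<rceil>)"
  using assms by (auto simp: ceiling_le_iff nat_le_iff)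

lemma dstar_formula_le_gfun:
  assumes "n > 0" "0 \<le> s" "s \<le> real n" "real m \<ge> 2 * (of_int \<lceil>s\<rceil> - 1)"
    and "\<alpha> \<in> polytopeP n s"
  shows "dstar_formula n m s \<le> gfun n m s \<alpha>"
proof -
  define c where "c = nat \<lceil>s\<rceil>"
  define x where "x i = \<alpha> i + 1 - s / real n" for i
  define a where "a = real n - real c + 1"
  have c: "c \<le> n" "real c - 1 \<le> s" "s \<le> real c"
    using nat_ceiling_bounds[OF assms(2,3)] by (simp_all add: c_def)
  have first: "\<alpha> 1 \<le> s / real n" and steps: "\<forall>i\<in>{1..<n}. \<alpha> (Suc i) \<le> \<alpha> i"
    and sum0: "(\<Sum>i=1..n. \<alpha> i) = 0"
    using assms(1,5) unfolding polytopeP_def by auto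
  have "gfun n m s \<alpha> = dstar_formula n m s
      + (\<Sum>i=1..n. (real m + 2 * a - 2 * real i) * (max 0 (x i) - x i))
      + 2 * (\<Sum>i=1..n. (real i - a) * max 0 (x i) - min (real i - a) 0)"
    unfolding a_def by (rule gfun_eq_dstar_formula_plus_slack[OF assms(1) c sum0]) (simp add: x_def)
  moreover have "0 \<le> (\<Sum>i=1..n. (real m + 2 * a - 2 * real i) * (max 0 (x i) - x i))"
    using assms(2,4) c by (intro sum_nonneg) (simp add: a_def c_def)
  moreover have "0 \<le> (\<Sum>i=1..n. (real i - a) * max 0 (x i) - min (real i - a) 0)"
  proof (intro sum_nonneg)
    fix i assume "i \<in> {1..n}"
    then have "x i \<le> 1" using antitone_steps_le_first[OF steps, of i] first by (simp add: x_def)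
    then show "0 \<le> (real i - a) * max 0 (x i) - min (real i - a) 0"
      using min_zero_le_mult_unit[of "max 0 (x i)" "real i - a"] by simp
  qed
  ultimately show ?thesis by linarith
qed

lemma dstar_formula_attained:
  assumes "n > 0" "0 \<le> s" "s \<le> real n"
  shows "\<exists>\<alpha>\<in>polytopeP n s. gfun n m s \<alpha> = dstar_formula n m s"
proof -
  define c where "c = nat \<lceil>s\<rceil>"
  define a where "a = n - c + 1"
  define x where "x i = (if i < a then 1 else if i = a then real c - s else 0)" for i
  define \<alpha> where "\<alpha> i = (if i \<in> {1..n} then x i - 1 + s / real n else 0)" for i
  have c: "c \<le> n" "real c - 1 \<le> s" "s \<le> real c"
    using nat_ceiling_bounds[OF assms(2,3)] by (simp_all add: c_def)
  have sum_x: "(\<Sum>i=1..n. x i) = real n - s"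
  proof (cases "c = 0")
    case True
    then show ?thesis using c assms(2) by (simp add: x_def a_def)
  next
    case False
    then have "{1..n} = {1..<a} \<union> {a} \<union> {a<..n}" using c(1) by (auto simp: a_def)
    then have "(\<Sum>i=1..n. x i) = (\<Sum>i\<in>{1..<a}. x i) + x a + (\<Sum>i\<in>{a<..n}. x i)"
      by (simp add: sum.union_disjoint) (subst sum.union_disjoint; auto)
    then show ?thesis using c(1) by (simp add: x_def a_def)
  qed
  have sum_\<alpha>: "(\<Sum>i=1..n. \<alpha> i) = 0"
    using sum_x assms(1) by (simp add: \<alpha>_def sum.distrib sum_subtractf)
  have "\<alpha> \<in> polytopeP n s"
    unfolding polytopeP_def
  proof (intro CollectI conjI allI impI ballI)
    show "\<alpha> 1 \<le> s / real n" using c assms by (simp add: \<alpha>_def x_def)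
    show "(\<Sum>i=1..n. \<alpha> i) = 0" by (fact sum_\<alpha>)
  next
    fix i assume "i \<in> {1..<n}"
    then show "\<alpha> (Suc i) \<le> \<alpha> i" using c by (auto simp: \<alpha>_def x_def)
  qed (auto simp: \<alpha>_def)
  moreover have "gfun n m s \<alpha> = dstar_formula n m s"
  proof -
    have x_\<alpha>: "x i = \<alpha> i + 1 - s / real n" if "i \<in> {1..n}" for i
      using that by (simp add: \<alpha>_def)
    have "0 \<le> x i" for i
      using c by (simp add: x_def)
    moreover have "(real i - (real n - real c + 1)) * x i = min (real i - (real n - real c + 1)) 0" for i
      using c by (cases i a rule: linorder_cases) (auto simp: x_def a_def)
    ultimately show ?thesis
      using gfun_eq_dstar_formula_plus_slack[OF assms(1) c sum_\<alpha> x_\<alpha>, of m] by simp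
  qed
  ultimately show ?thesis by blast
qed

theorem mainTheorem4:
  fixes n m :: nat and s :: real
  assumes "n > 0" "m > 0" "0 \<le> s" "s \<le> real n"
    and "real m \<ge> 2 * (of_int \<lceil>s\<rceil> - 1)"
  shows "(\<exists>\<alpha>\<in>polytopeP n s. gfun n m s \<alpha> = dstar_formula n m s)
       \<and> (\<forall>\<alpha>\<in>polytopeP n s. dstar_formula n m s \<le> gfun n m s \<alpha>)"
  using dstar_formula_attained[OF assms(1,3,4)] dstar_formula_le_gfun[OF assms(1,3-5)] by blast

end
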